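(* Let $n\geq 11$ with $n\equiv 3\pmod 4$ and let $r=4$. Let $V=\{v_1,\dots,v_n\}$ and consider the labelled path graph with edges: $\{v_1,v_2\}$ with label $0$; $\{v_2,v_3\}$ with label $1$; $\{v_3,v_4\}$ with the two labels $0$ and $2$; for $4\leq s\leq n-3$, $\{v_s,v_{s+1}\}$ with label $1$ if $s$ is even and label $0$ if $s$ is odd; $\{v_{n-2},v_{n-1}\}$ with label $2$; and $\{v_{n-1},v_n\}$ with label $3$. Then $G=\mathrm{Sym}(V)\cong S_n$ and $(G,(\rho_0,\rho_1,\rho_2,\rho_3))$ is a string C-group.
   Context: A string group generated by involutions (sggi) of rank $r$ is a pair $(G,(\rho_0,\dots,\rho_{r-1}))$ where $\rho_0,\dots,\rho_{r-1}$ are involutions generating the group $G$ such that $(\rho_i\rho_j)^2=1$ whenever $|i-j|\geq 2$. It is a string C-group if in addition it satisfies the intersection property: for all $J,K\subseteq\{0,\dots,r-1\}$, $\langle \rho_j : j\in J\rangle\cap\langle\rho_k : k\in K\rangle=\langle \rho_j : j\in J\cap K\rangle$. Labelled-graph convention: the vertex set $V$ is finite, and each edge $\{a,b\}$ ($a\neq b$) carries one or more labels from $\{0,\dots,r-1\}$, the edges carrying any given label being pairwise disjoint; $\rho_k$ denotes the permutation of $V$ equal to the product of the transpositions $(a\,b)$ over all edges $\{a,b\}$ carrying label $k$, and $G=\langle\rho_0,\dots,\rho_{r-1}\rangle\leq \mathrm{Sym}(V)$. *)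

theory Defs
  imports "HOL-Algebra.Sym_Groups" "HOL-Algebra.Generated_Groups"
begin

text \<open>Permutation determined by a set E of pairwise disjoint edges (2-element sets):
  the product of the transpositions (a b) over all edges {a,b} in E.\<close>
definition edge_perm :: "'a set set \<Rightarrow> 'a \<Rightarrow> 'a" where
  "edge_perm E x = (if \<exists>y. y \<noteq> x \<and> {x, y} \<in> E then (THE y. y \<noteq> x \<and> {x, y} \<in> E) else x)"

text \<open>Labels carried by the path edge {v_s, v_(s+1)} (vertices v_i identified with i, 1 <= i <= n).\<close>
definition path_label :: "nat \<Rightarrow> nat \<Rightarrow> nat \<Rightarrow> bool" where
  "path_label n s k \<longleftrightarrow>
     (s = 1 \<and> k = 0) \<or> (s = 2 \<and> k = 1) \<or> (s = 3 \<and> (k = 0 \<or> k = 2)) \<or>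
     (4 \<le> s \<and> s \<le> n - 3 \<and> k = (if even s then 1 else 0)) \<or>
     (s = n - 2 \<and> k = 2) \<or> (s = n - 1 \<and> k = 3)"

definition path_edges :: "nat \<Rightarrow> nat \<Rightarrow> nat set set" where
  "path_edges n k = {{s, s + 1} | s. 1 \<le> s \<and> s \<le> n - 1 \<and> path_label n s k}"

definition rho :: "nat \<Rightarrow> nat \<Rightarrow> nat \<Rightarrow> nat" where
  "rho n k = edge_perm (path_edges n k)"

text \<open>String group generated by involutions (of rank r) inside an ambient group Amb:
  the group is the subgroup generated by rho_0..rho_(r-1).\<close>
definition sggi :: "('a, 'b) monoid_scheme \<Rightarrow> nat \<Rightarrow> (nat \<Rightarrow> 'a) \<Rightarrow> bool" where
  "sggi Amb r \<rho> \<longleftrightarrow>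
     (\<forall>i<r. \<rho> i \<in> carrier Amb \<and> \<rho> i \<noteq> \<one>\<^bsub>Amb\<^esub> \<and> \<rho> i \<otimes>\<^bsub>Amb\<^esub> \<rho> i = \<one>\<^bsub>Amb\<^esub>) \<and>
     (\<forall>i<r. \<forall>j<r. 2 \<le> \<bar>int i - int j\<bar> \<longrightarrow>
        (\<rho> i \<otimes>\<^bsub>Amb\<^esub> \<rho> j) \<otimes>\<^bsub>Amb\<^esub> (\<rho> i \<otimes>\<^bsub>Amb\<^esub> \<rho> j) = \<one>\<^bsub>Amb\<^esub>)"

definition string_C_group :: "('a, 'b) monoid_scheme \<Rightarrow> nat \<Rightarrow> (nat \<Rightarrow> 'a) \<Rightarrow> bool" where
  "string_C_group Amb r \<rho> \<longleftrightarrow> sggi Amb r \<rho> \<and>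
     (\<forall>J K. J \<subseteq> {..<r} \<longrightarrow> K \<subseteq> {..<r} \<longrightarrow>
        generate Amb (\<rho> ` J) \<inter> generate Amb (\<rho> ` K) = generate Amb (\<rho> ` (J \<inter> K)))"

end

theory Submission
  imports Defs "HOL-Combinatorics.Permutations"
begin

text \<open>Identify v_i with i. Then \<rho>0 = (1 2)(3 4)\<dots>(n-4 n-3), \<rho>1 = (2 3)(4 5)\<dots>(n-3 n-2),
  \<rho>2 = (3 4)(n-2 n-1) and \<rho>3 = (n-1 n). Conjugating (n-1 n) successively by \<rho>2, \<rho>1, \<rho>0
  yields every transposition (i n), so the \<rho>i generate Sym(n).

  By induction on the index set, the intersection property reduces to
  \<open>\<langle>M \<union> {a}\<rangle> \<inter> \<langle>M \<union> {b}\<rangle> = \<langle>M\<rangle>\<close> for indices a \<noteq> b outside M, i.e. to 24 concrete checks.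
  They follow from simple invariants: \<langle>\<rho>1,\<rho>2,\<rho>3\<rangle> fixes 1, \<langle>\<rho>0,\<rho>1,\<rho>2\<rangle> fixes n and
  consists of even permutations, commuting pairs generate Klein four-groups, \<langle>\<rho>0,\<rho>1\<rangle> is the
  dihedral group of an (n-2)-cycle, and adding a generator commuting with the others at most
  doubles a subgroup. The one substantial case is
  \<open>\<langle>\<rho>0,\<rho>1,\<rho>2\<rangle> \<inter> \<langle>\<rho>1,\<rho>2,\<rho>3\<rangle> = \<langle>\<rho>1,\<rho>2\<rangle>\<close>: elements of \<langle>\<rho>1,\<rho>2,\<rho>3\<rangle> preserve the tail
  {n-3..n} and the blocks {2,5}, {3,4}; multiplying an element of the intersection by suitable
  elements of \<langle>\<rho>1,\<rho>2\<rangle> normalises it on the tail and at 2, which leaves only id or (3 4),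
  and parity excludes (3 4).\<close>

lemma (in group) generate_involutions_subset:
  assumes "S \<subseteq> carrier G" and "\<And>s. s \<in> S \<Longrightarrow> s \<otimes> s = \<one>"
    and "\<one> \<in> Q" and "S \<subseteq> Q" and "\<And>x y. x \<in> Q \<Longrightarrow> y \<in> Q \<Longrightarrow> x \<otimes> y \<in> Q"
  shows "generate G S \<subseteq> Q"
proof
  fix x assume "x \<in> generate G S"
  then show "x \<in> Q"
  proof (induction rule: generate.induct)
    case (inv s)
    then have "inv s = s" using assms(1,2) by (intro inv_equality) auto
    then show ?case using inv assms(4) by auto
  qed (use assms in auto)
qed

lemma (in group) generate_commuting_involutions:
  assumes "a \<in> carrier G" "b \<in> carrier G" "a \<otimes> a = \<one>" "b \<otimes> b = \<one>" "a \<otimes> b = b \<otimes> a"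
  shows "generate G {a, b} \<subseteq> {\<one>, a, b, a \<otimes> b}"
proof (rule generate_involutions_subset)
  have a_ab: "a \<otimes> (a \<otimes> b) = b" and ab_b: "(a \<otimes> b) \<otimes> b = a"
    using assms(1-4) by (simp_all flip: m_assoc) (simp add: m_assoc)
  have b_ab: "b \<otimes> (a \<otimes> b) = a" and ab_a: "(a \<otimes> b) \<otimes> a = b"
    using assms(1-4) by (simp_all add: assms(5) m_assoc flip: m_assoc[of b])
  have ab_ab: "(a \<otimes> b) \<otimes> (a \<otimes> b) = \<one>"
    using assms(1-3) b_ab by (simp add: m_assoc)
  show "x \<otimes> y \<in> {\<one>, a, b, a \<otimes> b}" if "x \<in> {\<one>, a, b, a \<otimes> b}" "y \<in> {\<one>, a, b, a \<otimes> b}" for x y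
    using that assms a_ab ab_b b_ab ab_a ab_ab by auto
qed (use assms in auto)

lemma (in group) generate_insert_central_involution:
  assumes S: "S \<subseteq> carrier G" "\<And>x. x \<in> S \<Longrightarrow> x \<otimes> x = \<one>"
    and s: "s \<in> carrier G" "s \<otimes> s = \<one>" and central: "\<And>x. x \<in> S \<Longrightarrow> x \<otimes> s = s \<otimes> x"
  shows "generate G (insert s S) \<subseteq> generate G S \<union> (\<lambda>x. x \<otimes> s) ` generate G S"
proof -
  let ?H = "generate G S"
  have H_carrier: "?H \<subseteq> carrier G" by (rule generate_incl[OF S(1)])
  have "?H \<subseteq> {x \<in> carrier G. x \<otimes> s = s \<otimes> x}"
  proof (rule generate_involutions_subset[OF S])
    show "x \<otimes> y \<in> {x \<in> carrier G. x \<otimes> s = s \<otimes> x}"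
      if "x \<in> {x \<in> carrier G. x \<otimes> s = s \<otimes> x}" "y \<in> {x \<in> carrier G. x \<otimes> s = s \<otimes> x}" for x y
      using that s by (auto simp: m_assoc) (metis m_assoc)
  qed (use S s central in auto)
  then have comm: "x \<otimes> s = s \<otimes> x" if "x \<in> ?H" for x using that by blast
  show ?thesis
  proof (rule generate_involutions_subset)
    show "x \<otimes> y \<in> ?H \<union> (\<lambda>x. x \<otimes> s) ` ?H" if "x \<in> ?H \<union> (\<lambda>x. x \<otimes> s) ` ?H" "y \<in> ?H \<union> (\<lambda>x. x \<otimes> s) ` ?H" for x y
    proof -
      have prod: "x' \<otimes> y' \<in> ?H" if "x' \<in> ?H" "y' \<in> ?H" for x' y' using that by (rule generate.eng)
      have [simp]: "x' \<in> ?H \<Longrightarrow> x' \<in> carrier G" for x' using H_carrier by blast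
      from that show ?thesis
      proof (elim UnE imageE)
        fix x' y' assume "x' \<in> ?H" "y' \<in> ?H" "x = x' \<otimes> s" "y = y' \<otimes> s"
        then have "x \<otimes> y = x' \<otimes> y'" using s comm[of y'] by (simp add: m_assoc) (simp flip: m_assoc)
        then show ?thesis using prod \<open>x' \<in> ?H\<close> \<open>y' \<in> ?H\<close> by simp
      next
        fix x' assume "x' \<in> ?H" "y \<in> ?H" "x = x' \<otimes> s"
        then have "x \<otimes> y = (x' \<otimes> y) \<otimes> s" using s comm[of y] by (simp add: m_assoc)
        then show ?thesis using prod \<open>x' \<in> ?H\<close> \<open>y \<in> ?H\<close> by blast
      next
        fix y' assume "x \<in> ?H" "y' \<in> ?H" "y = y' \<otimes> s"
        then have "x \<otimes> y = (x \<otimes> y') \<otimes> s" using s by (simp add: m_assoc)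
        then show ?thesis using prod \<open>x \<in> ?H\<close> \<open>y' \<in> ?H\<close> by blast
      qed (use prod in blast)
    qed
    have "s = \<one> \<otimes> s" using s by simp
    then show "insert s S \<subseteq> ?H \<union> (\<lambda>x. x \<otimes> s) ` ?H"
      using generate.one[of G S] generate.incl[of _ S G] by blast
  qed (use S s generate.one in auto)
qed

text \<open>If J and K both avoid some index a, induct on I - {a}; otherwise pass through
  \<open>generate G (g ` (I - {a, b}))\<close> for a \<notin> J and b \<notin> K.\<close>

lemma (in group) generate_Int_generate_eq:
  fixes g :: "'i::linorder \<Rightarrow> 'a"
  assumes "finite I" and "J \<subseteq> I" and "K \<subseteq> I"
    and "\<And>M a b. \<lbrakk>M \<subseteq> I; a \<in> I - M; b \<in> I - M; a < b\<rbrakk> \<Longrightarrow>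
       generate G (g ` insert a M) \<inter> generate G (g ` insert b M) \<subseteq> generate G (g ` M)"
  shows "generate G (g ` J) \<inter> generate G (g ` K) = generate G (g ` (J \<inter> K))"
  using assms
proof (induction I arbitrary: J K rule: finite_psubset_induct)
  case (psubset I)
  let ?gen = "\<lambda>J. generate G (g ` J)"
  have mono: "A \<subseteq> B \<Longrightarrow> ?gen A \<subseteq> ?gen B" for A B by (intro mono_generate image_mono)
  have corank_two: "?gen (I - {a}) \<inter> ?gen (I - {b}) \<subseteq> ?gen (I - {a, b})"
    if "a \<in> I" "b \<in> I" "a \<noteq> b" for a b
  proof -
    let ?M = "I - {a, b}"
    have eqs: "I - {a} = insert b ?M" "I - {b} = insert a ?M" using that by auto
    have pair: "?gen (insert c ?M) \<inter> ?gen (insert d ?M) \<subseteq> ?gen ?M"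
      if "c \<in> {a, b}" "d \<in> {a, b}" "c < d" for c d
      by (rule psubset.prems(3)) (use \<open>a \<in> I\<close> \<open>b \<in> I\<close> that in auto)
    from \<open>a \<noteq> b\<close> consider "a < b" | "b < a" by (rule neqE)
    then show ?thesis
    proof cases
      case 1
      show ?thesis unfolding eqs by (subst Int_commute) (rule pair, use 1 in auto)
    next
      case 2
      show ?thesis unfolding eqs by (rule pair) (use 2 in auto)
    qed
  qed
  have smaller: "?gen J' \<inter> ?gen K' = ?gen (J' \<inter> K')" if "a \<in> I" "J' \<subseteq> I - {a}" "K' \<subseteq> I - {a}" for a J' K'
  proof (rule psubset.IH)
    show "I - {a} \<subset> I" using that(1) by blast
    show "?gen (insert c M) \<inter> ?gen (insert d M) \<subseteq> ?gen M"
      if "M \<subseteq> I - {a}" "c \<in> I - {a} - M" "d \<in> I - {a} - M" "c < d" for M c d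
      using that by (intro psubset.prems(3)) auto
  qed (use that in auto)
  show ?case
  proof (rule equalityI)
    show "?gen (J \<inter> K) \<subseteq> ?gen J \<inter> ?gen K" using mono by blast
    show "?gen J \<inter> ?gen K \<subseteq> ?gen (J \<inter> K)"
    proof (cases "J = I \<or> K = I")
      case True
      then show ?thesis using psubset.prems(1,2) by (auto simp: Int_absorb1 Int_absorb2)
    next
      case False
      then obtain a b where a: "a \<in> I" "a \<notin> J" and b: "b \<in> I" "b \<notin> K"
        using psubset.prems(1,2) by blast
      consider "a \<notin> K" | "b \<notin> J" | "a \<in> K" "b \<in> J" by blast
      then show ?thesis
      proof cases
        case 1 then show ?thesis using smaller[of a J K] a psubset.prems(1,2) by blast
      next
        case 2 then show ?thesis using smaller[of b J K] b psubset.prems(1,2) by blast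
      next
        case 3
        have "?gen J \<inter> ?gen K \<subseteq> ?gen (I - {a}) \<inter> ?gen (I - {b})"
          using mono[of J "I - {a}"] mono[of K "I - {b}"] a b psubset.prems(1,2) by blast
        also have "\<dots> \<subseteq> ?gen (I - {a, b})" using corank_two a b 3 by blast
        finally have "?gen J \<inter> ?gen K \<subseteq> ?gen J \<inter> ?gen (I - {a, b}) \<inter> ?gen K" by blast
        also have "?gen J \<inter> ?gen (I - {a, b}) = ?gen (J - {b})"
        proof -
          have "J \<inter> (I - {a, b}) = J - {b}" using a psubset.prems(1) by blast
          then show ?thesis using smaller[of a J "I - {a, b}"] a psubset.prems(1) by auto
        qed
        also have "?gen (J - {b}) \<inter> ?gen K = ?gen (J \<inter> K)"
        proof -
          have "(J - {b}) \<inter> K = J \<inter> K" using b by blast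
          then show ?thesis using smaller[of b "J - {b}" K] b psubset.prems(1,2) by auto
        qed
        finally show ?thesis .
      qed
    qed
  qed
qed

fun swap_pairs :: "nat \<Rightarrow> nat \<Rightarrow> nat \<Rightarrow> nat" where
  "swap_pairs a 0 = id"
| "swap_pairs a (Suc m) = Transposition.transpose (a + 2 * m) (a + 2 * m + 1) \<circ> swap_pairs a m"

lemma swap_pairs_apply:
  "swap_pairs a m x = (if a \<le> x \<and> x < a + 2 * m then if even (x - a) then x + 1 else x - 1 else x)"
proof (induction m arbitrary: x)
  case (Suc m)
  show ?case by (simp add: Suc Transposition.transpose_def) presburger
qed simp

lemma permutation_swap_pairs: "permutation (swap_pairs a m)"
proof (induction m)
  case (Suc m)
  show ?case unfolding swap_pairs.simps by (rule permutation_compose[OF permutation_swap_id Suc])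
qed simp

lemma evenperm_swap_pairs: "evenperm (swap_pairs a m) \<longleftrightarrow> even m"
proof (induction m)
  case (Suc m)
  show ?case unfolding swap_pairs.simps
    by (subst evenperm_comp) (auto simp: Suc permutation_swap_pairs permutation_swap_id evenperm_swap)
qed simp

lemma swap_pairs_involution: "swap_pairs a m (swap_pairs a m x) = x"
  unfolding swap_pairs_apply by auto presburger+

lemma swap_pairs_permutes: "swap_pairs a m permutes {a..<a + 2 * m}"
proof (induction m)
  case (Suc m)
  have "Transposition.transpose (a + 2 * m) (a + 2 * m + 1) permutes {a..<a + 2 * Suc m}"
    by (rule permutes_swap_id) auto
  moreover have "swap_pairs a m permutes {a..<a + 2 * Suc m}"
    by (rule permutes_subset[OF Suc]) auto
  ultimately show ?case unfolding swap_pairs.simps by (rule permutes_compose[rotated])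
qed (simp only: swap_pairs.simps(1) permutes_id)

lemma permutes_transpose_commute:
  assumes "p permutes S" "a \<notin> S" "b \<notin> S"
  shows "p \<circ> Transposition.transpose a b = Transposition.transpose a b \<circ> p"
proof
  fix x
  have "p x \<notin> {a, b}" if "x \<notin> {a, b}"
    using that assms permutes_not_in[OF assms(1)] permutes_in_image[OF assms(1)] by (cases "x \<in> S") auto
  then show "(p \<circ> Transposition.transpose a b) x = (Transposition.transpose a b \<circ> p) x"
    using assms permutes_not_in[OF assms(1)] by (auto simp: Transposition.transpose_def)
qed

lemma involution_conj_transpose:
  assumes "\<And>x. r (r x) = x"
  shows "r \<circ> Transposition.transpose a b \<circ> r = Transposition.transpose (r a) (r b)"
  using assms by (auto simp: fun_eq_iff Transposition.transpose_def)


lemma commuting_involutions_comp_square: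
  assumes "a \<circ> b = b \<circ> a" "a \<circ> a = id" "b \<circ> b = id"
  shows "(a \<circ> b) \<circ> (a \<circ> b) = id"
proof -
  have "(a \<circ> b) \<circ> (a \<circ> b) = (a \<circ> a) \<circ> (b \<circ> b)" using assms(1) by (metis comp_assoc)
  then show ?thesis using assms(2,3) by simp
qed

lemma generate_sym_group_by_transpositions:
  assumes "S \<subseteq> carrier (sym_group n)"
    and "\<And>a. a \<in> {1..<n} \<Longrightarrow> Transposition.transpose a n \<in> generate (sym_group n) S"
  shows "generate (sym_group n) S = carrier (sym_group n)"
proof
  interpret sym: group "sym_group n" by (rule sym_group_is_group)
  show "generate (sym_group n) S \<subseteq> carrier (sym_group n)" using assms(1) by (rule sym.generate_incl)
  have comp: "p \<circ> q \<in> generate (sym_group n) S" if "p \<in> generate (sym_group n) S" "q \<in> generate (sym_group n) S" for p q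
    using generate.eng[OF that] by (simp add: sym_group_mult)
  have transp: "Transposition.transpose a b \<in> generate (sym_group n) S" if "a \<in> {1..n}" "b \<in> {1..n}" "a \<noteq> b" for a b
  proof -
    consider "b = n" | "a = n" | "a \<noteq> n" "b \<noteq> n" by blast
    then show ?thesis
    proof cases
      case 1 then show ?thesis using assms(2) that by auto
    next
      case 2 then show ?thesis using assms(2)[of b] that by (auto simp: transpose_commute)
    next
      case 3
      then have "Transposition.transpose a b =
          Transposition.transpose a n \<circ> Transposition.transpose n b \<circ> Transposition.transpose a n"
        using that by (simp add: transpose_comp_triple)
      then show ?thesis using assms(2)[of a] assms(2)[of b] that 3 comp by (auto simp: transpose_commute)
    qed
  qed
  show "carrier (sym_group n) \<subseteq> generate (sym_group n) S"
  proof
    fix p assume "p \<in> carrier (sym_group n)"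
    then have "p permutes {1..n}" by (simp add: sym_group_carrier)
    from this finite_atLeastAtMost show "p \<in> generate (sym_group n) S"
    proof (induction rule: permutes_induct)
      case id then show ?case using generate.one[of "sym_group n" S] by (simp only: sym_group_one)
    next
      case (swap a b p) then show ?case using transp comp by blast
    qed
  qed
qed

lemma edge_perm_eqI:
  assumes "\<And>z. z \<noteq> x \<and> {x, z} \<in> E \<longleftrightarrow> z = f x \<and> f x \<noteq> x"
  shows "edge_perm E x = f x"
proof (cases "f x = x")
  case True
  then show ?thesis using assms unfolding edge_perm_def by auto
next
  case False
  then have "(THE y. y \<noteq> x \<and> {x, y} \<in> E) = f x"
    using assms by (intro the_equality) auto
  then show ?thesis using assms False unfolding edge_perm_def by auto
qed

lemma edge_perm_consecutive:
  assumes "\<And>s. s \<in> A \<Longrightarrow> Suc s \<notin> A"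
  shows "edge_perm {{s, Suc s} | s. s \<in> A} x =
    (if x \<in> A then Suc x else if x \<noteq> 0 \<and> x - 1 \<in> A then x - 1 else x)"
  by (rule edge_perm_eqI) (use assms in \<open>cases x; auto simp: doubleton_eq_iff\<close>)

definition r0 :: "nat \<Rightarrow> nat \<Rightarrow> nat" where
  "r0 n = swap_pairs 1 ((n - 3) div 2)"

definition r1 :: "nat \<Rightarrow> nat \<Rightarrow> nat" where
  "r1 n = swap_pairs 2 ((n - 3) div 2)"

definition r2 :: "nat \<Rightarrow> nat \<Rightarrow> nat" where
  "r2 n = Transposition.transpose 3 4 \<circ> Transposition.transpose (n - 2) (n - 1)"

definition r3 :: "nat \<Rightarrow> nat \<Rightarrow> nat" where
  "r3 n = Transposition.transpose (n - 1) n"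

text \<open>Adjacency in the (n-2)-cycle 1 - 3 - 5 - \<dots> - (n-2) - (n-3) - \<dots> - 4 - 2 - 1, of which
  \<rho>0 and \<rho>1 are reflections.\<close>

definition cycle_adj :: "nat \<Rightarrow> nat \<Rightarrow> nat \<Rightarrow> bool" where
  "cycle_adj n x y \<longleftrightarrow> 1 \<le> x \<and> x \<le> n - 2 \<and> 1 \<le> y \<and> y \<le> n - 2 \<and>
     (y = x + 2 \<or> x = y + 2 \<or> {x, y} = {1, 2} \<or> {x, y} = {n - 3, n - 2})"

text \<open>The shape of the elements of \<langle>\<rho>1,\<rho>2,\<rho>3\<rangle>: on {2..5} they preserve the blocks {2,5}, {3,4},
  and on {6..n-4} they act as \<rho>1 exactly when they swap the two blocks (flag s).\<close>

definition upper_shape :: "nat \<Rightarrow> (nat \<Rightarrow> nat) \<Rightarrow> bool" where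
  "upper_shape n p \<longleftrightarrow> p 1 = 1 \<and> (\<forall>x \<in> {n - 3..n}. p x \<in> {n - 3..n}) \<and>
     (\<exists>s. (\<forall>x \<in> {2..5}. p x \<in> {2..5} \<and> (p x \<in> {3, 4} \<longleftrightarrow> (x \<in> {3, 4}) \<noteq> s)) \<and>
          (\<forall>x \<in> {6..n - 4}. p x = (if s then r1 n x else x)))"

locale labelled_path =
  fixes n k :: nat
  assumes n_eq: "n = 4 * k + 3" and k_ge: "k \<ge> 2"
begin

abbreviation "R0 \<equiv> r0 n"
abbreviation "R1 \<equiv> r1 n"
abbreviation "R2 \<equiv> r2 n"
abbreviation "R3 \<equiv> r3 n"
abbreviation "Gen S \<equiv> generate (sym_group n) S"

lemma path_label_cases:
  "path_label n s 0 \<longleftrightarrow> s = 1 \<or> s = 3 \<or> (4 \<le> s \<and> s \<le> n - 3 \<and> odd s)"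
  "path_label n s 1 \<longleftrightarrow> s = 2 \<or> (4 \<le> s \<and> s \<le> n - 3 \<and> even s)"
  "path_label n s 2 \<longleftrightarrow> s = 3 \<or> s = n - 2"
  "path_label n s 3 \<longleftrightarrow> s = n - 1"
  "path_label n s i \<Longrightarrow> i < 4"
  unfolding path_label_def using n_eq k_ge by auto

lemma path_label_not_consecutive:
  assumes "path_label n s i" shows "\<not> path_label n (Suc s) i"
proof -
  have n: "n - 3 \<ge> 4" "odd n" using n_eq k_ge by simp_all
  have "i = 0 \<or> i = 1 \<or> i = 2 \<or> i = 3" using path_label_cases(5)[OF assms] by arith
  then show ?thesis
  proof (elim disjE)
    assume "i = 1" then show ?thesis using assms n unfolding \<open>i = 1\<close> path_label_cases by auto
  qed (use assms n in \<open>auto simp: path_label_cases\<close>)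
qed

lemma rho_apply:
  "rho n i x = (if 1 \<le> x \<and> x \<le> n - 1 \<and> path_label n x i then Suc x
     else if 2 \<le> x \<and> x \<le> n \<and> path_label n (x - 1) i then x - 1 else x)"
proof -
  let ?A = "{s. 1 \<le> s \<and> s \<le> n - 1 \<and> path_label n s i}"
  have "path_edges n i = {{s, Suc s} | s. s \<in> ?A}"
    unfolding path_edges_def by auto
  moreover have "Suc s \<notin> ?A" if "s \<in> ?A" for s
    using that path_label_not_consecutive by auto
  ultimately show ?thesis
    unfolding rho_def using edge_perm_consecutive[of ?A x] by (auto simp: le_diff_conv2)
qed

lemma rho0: "rho n 0 = R0"
proof
  fix x
  have "(n - 3) div 2 = 2 * k" using n_eq by simp
  then show "rho n 0 x = R0 x"
    unfolding rho_apply r0_def swap_pairs_apply path_label_cases using n_eq k_ge by auto presburger+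
qed

lemma rho1: "rho n 1 = R1"
proof
  fix x
  have "(n - 3) div 2 = 2 * k" using n_eq by simp
  then show "rho n 1 x = R1 x"
    unfolding rho_apply r1_def swap_pairs_apply path_label_cases using n_eq k_ge by auto presburger+
qed

lemma rho2: "rho n 2 = R2" and rho3: "rho n 3 = R3"
  unfolding fun_eq_iff rho_apply r2_def r3_def path_label_cases Transposition.transpose_def
  using n_eq k_ge by auto

lemma R_involution: "R0 (R0 x) = x" "R1 (R1 x) = x" "R2 (R2 x) = x" "R3 (R3 x) = x"
  unfolding r0_def r1_def r2_def r3_def using n_eq k_ge
  by (simp_all add: swap_pairs_involution) (auto simp: Transposition.transpose_def)

text \<open>The \<open>Suc 0\<close> copy of \<open>rho1\<close> is needed once the simplifier has rewritten the index 1.\<close>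

lemmas rho_eq = rho0 rho1 rho1[unfolded One_nat_def] rho2 rho3

lemma R0_apply: "R0 x = (if 1 \<le> x \<and> x \<le> 4 * k then if odd x then x + 1 else x - 1 else x)"
  unfolding r0_def swap_pairs_apply n_eq by auto

lemma R1_apply: "R1 x = (if 2 \<le> x \<and> x \<le> 4 * k + 1 then if even x then x + 1 else x - 1 else x)"
  unfolding r1_def swap_pairs_apply n_eq by auto

lemma R0_values: "R0 1 = 2" "R0 2 = 1" "R0 (n - 2) = n - 2" "R0 (n - 1) = n - 1" "R0 n = n"
  unfolding r0_def swap_pairs_apply n_eq using k_ge by simp_all

lemma R1_values:
  "R1 1 = 1" "R1 2 = 3" "R1 3 = 2" "R1 4 = 5" "R1 5 = 4"
  "R1 (n - 3) = n - 2" "R1 (n - 2) = n - 3" "R1 (n - 1) = n - 1" "R1 n = n"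
  unfolding r1_def swap_pairs_apply n_eq using k_ge by simp_all

lemma R2_values:
  "R2 1 = 1" "R2 2 = 2" "R2 3 = 4" "R2 4 = 3" "R2 5 = 5"
  "R2 (n - 3) = n - 3" "R2 (n - 2) = n - 1" "R2 (n - 1) = n - 2" "R2 n = n"
  unfolding r2_def Transposition.transpose_def n_eq using k_ge by simp_all

lemma R3_values:
  "R3 1 = 1" "R3 2 = 2" "R3 3 = 3" "R3 4 = 4" "R3 5 = 5"
  "R3 (n - 3) = n - 3" "R3 (n - 2) = n - 2" "R3 (n - 1) = n" "R3 n = n - 1"
  unfolding r3_def Transposition.transpose_def n_eq using k_ge by simp_all

lemma R_permutes: "R0 permutes {1..n}" "R1 permutes {1..n}" "R2 permutes {1..n}" "R3 permutes {1..n}"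
proof -
  show "R0 permutes {1..n}" "R1 permutes {1..n}"
    unfolding r0_def r1_def by (rule permutes_subset[OF swap_pairs_permutes], use n_eq in auto)+
  show "R2 permutes {1..n}" "R3 permutes {1..n}"
    unfolding r2_def r3_def using n_eq k_ge by (auto intro!: permutes_compose permutes_swap_id)
qed

lemma R_even: "evenperm R0" "evenperm R1" "evenperm R2"
proof -
  have "(n - 3) div 2 = 2 * k" using n_eq by simp
  then show "evenperm R0" "evenperm R1" unfolding r0_def r1_def evenperm_swap_pairs by simp_all
  show "evenperm R2" unfolding r2_def using n_eq
    by (simp add: evenperm_comp permutation_swap_id evenperm_swap)
qed

lemma R_commute: "R0 \<circ> R2 = R2 \<circ> R0" "R0 \<circ> R3 = R3 \<circ> R0" "R1 \<circ> R3 = R3 \<circ> R1"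
  unfolding fun_eq_iff r0_def r1_def r2_def r3_def swap_pairs_apply Transposition.transpose_def n_eq
  using k_ge by (auto; presburger)+

lemma R_carrier: "{R0, R1, R2, R3} \<subseteq> carrier (sym_group n)"
  using R_permutes by (simp add: sym_group_carrier)

lemma R_comp_self: "r \<in> {R0, R1, R2, R3} \<Longrightarrow> r \<circ> r = id"
  using R_involution by (auto simp: fun_eq_iff)

lemma Gen_subset_invariant:
  assumes "S \<subseteq> {R0, R1, R2, R3}" "id \<in> Q" "S \<subseteq> Q" "\<And>p q. p \<in> Q \<Longrightarrow> q \<in> Q \<Longrightarrow> p \<circ> q \<in> Q"
  shows "Gen S \<subseteq> Q"
proof -
  have "S \<subseteq> carrier (sym_group n)" "\<And>s. s \<in> S \<Longrightarrow> s \<circ> s = id"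
    using assms(1) R_carrier R_comp_self by blast+
  then show ?thesis
    using group.generate_involutions_subset[OF sym_group_is_group[of n], of S Q] assms(2-)
    by (simp add: sym_group_mult sym_group_one)
qed

lemma Gen_id: "id \<in> Gen S"
  using generate.one[of "sym_group n" S] by (simp add: sym_group_one)

lemma Gen_comp: "p \<in> Gen S \<Longrightarrow> q \<in> Gen S \<Longrightarrow> p \<circ> q \<in> Gen S"
  using generate.eng[of p "sym_group n" S q] by (simp add: sym_group_mult)

lemma Gen_permutes:
  assumes "S \<subseteq> {R0, R1, R2, R3}" "p \<in> Gen S"
  shows "p permutes {1..n}"
proof -
  have "p \<in> carrier (sym_group n)"
    using group.generate_incl[OF sym_group_is_group[of n], of S] R_carrier assms by blast
  then show ?thesis by (simp add: sym_group_carrier)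
qed

lemma Gen_left_cancel:
  assumes "S \<subseteq> {R0, R1, R2, R3}" "w \<in> Gen S" "g permutes {1..n}" "w \<circ> g = id"
  shows "g \<in> Gen S"
proof -
  interpret sym: group "sym_group n" by (rule sym_group_is_group)
  have S: "S \<subseteq> carrier (sym_group n)" using assms(1) R_carrier by blast
  have w: "w \<in> carrier (sym_group n)" using sym.generate_incl[OF S] assms(2) by blast
  have g: "g \<in> carrier (sym_group n)" using assms(3) by (simp add: sym_group_carrier)
  have "w \<otimes>\<^bsub>sym_group n\<^esub> g = \<one>\<^bsub>sym_group n\<^esub>" using assms(4) by (simp only: sym_group_mult sym_group_one)
  then have "inv\<^bsub>sym_group n\<^esub> g = w" using g w by (rule sym.inv_equality)
  then have "g = inv\<^bsub>sym_group n\<^esub> w" using sym.inv_inv[OF g] by metis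
  then show ?thesis using sym.generate_m_inv_closed[OF S assms(2)] by metis
qed

lemma Gen_fixes:
  assumes "S \<subseteq> {R0, R1, R2, R3}" "\<And>r. r \<in> S \<Longrightarrow> r x = x" "p \<in> Gen S"
  shows "p x = x"
  using Gen_subset_invariant[of S "{p. p x = x}"] assms by auto

lemma Gen_evenperm:
  assumes "S \<subseteq> {R0, R1, R2, R3}" "\<And>r. r \<in> S \<Longrightarrow> evenperm r" "p \<in> Gen S"
  shows "evenperm p"
proof -
  have "Gen S \<subseteq> {p. permutation p \<and> evenperm p}"
  proof (rule Gen_subset_invariant)
    show "S \<subseteq> {p. permutation p \<and> evenperm p}"
      using assms(1,2) R_permutes permutes_imp_permutation[of "{1..n}"] by auto
  qed (use assms(1) in \<open>auto simp: permutation_compose evenperm_comp\<close>)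
  then show ?thesis using assms(3) by blast
qed

lemma Gen_commuting_pair:
  assumes "a \<in> {R0, R1, R2, R3}" "b \<in> {R0, R1, R2, R3}" "a \<circ> b = b \<circ> a"
  shows "Gen {a, b} \<subseteq> {id, a, b, a \<circ> b}"
  using group.generate_commuting_involutions[OF sym_group_is_group[of n], of a b] assms R_carrier R_comp_self
  by (auto simp: sym_group_mult sym_group_one)

lemma Gen_insert_commuting:
  assumes "S \<subseteq> {R0, R1, R2, R3}" "r \<in> {R0, R1, R2, R3}" "\<And>s. s \<in> S \<Longrightarrow> s \<circ> r = r \<circ> s"
  shows "Gen (insert r S) \<subseteq> Gen S \<union> (\<lambda>p. p \<circ> r) ` Gen S"
  using group.generate_insert_central_involution[OF sym_group_is_group[of n], of S r] assms R_carrier R_comp_self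
  by (auto simp: sym_group_mult sym_group_one)

lemma Gen_mono: "S \<subseteq> T \<Longrightarrow> Gen S \<subseteq> Gen T"
  by (rule group.mono_generate[OF sym_group_is_group])

lemma Gen_fixed_points:
  "p \<in> Gen {R1, R2, R3} \<Longrightarrow> p 1 = 1"
  "p \<in> Gen {R2, R3} \<Longrightarrow> p 2 = 2"
  "p \<in> Gen {R0, R1, R2} \<Longrightarrow> p n = n"
  "p \<in> Gen {R0, R1} \<Longrightarrow> p (n - 1) = n - 1"
  by (erule Gen_fixes[rotated 2]; use R0_values R1_values R2_values R3_values in auto)+

lemma Gen_insert_commuting_cases:
  assumes "S \<subseteq> {R0, R1, R2, R3}" "r \<in> {R0, R1, R2, R3}" "\<And>s. s \<in> S \<Longrightarrow> s \<circ> r = r \<circ> s"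
    and "g \<in> Gen (insert r S)"
  shows "g \<in> Gen S \<or> g \<circ> r \<in> Gen S"
proof -
  have "g \<in> Gen S \<or> (\<exists>h \<in> Gen S. g = h \<circ> r)" using Gen_insert_commuting[OF assms(1-3)] assms(4) by blast
  moreover have "h \<circ> r \<circ> r = h" for h using R_comp_self[OF assms(2)] by (simp add: comp_assoc)
  ultimately show ?thesis by metis
qed

lemma Gen_commuting_pair_Int:
  assumes "a \<in> {R0, R1, R2, R3}" "b \<in> {R0, R1, R2, R3}" "a \<circ> b = b \<circ> a"
    and "a x = x" "b x \<noteq> x" "\<And>p. p \<in> H \<Longrightarrow> p x = x"
  shows "Gen {a, b} \<inter> H \<subseteq> Gen {a}"
proof
  fix g assume g: "g \<in> Gen {a, b} \<inter> H"
  have "g \<in> {id, a, b, a \<circ> b}" using Gen_commuting_pair[OF assms(1-3)] g by blast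
  moreover have "a (a y) = y" for y using R_involution assms(1) by auto
  then have "a (b x) \<noteq> x" using assms(4,5) by metis
  moreover have "g x = x" using g assms(6) by blast
  ultimately have "g = id \<or> g = a" using assms(5) by auto
  then show "g \<in> Gen {a}" using Gen_id generate.incl[of a "{a}"] by auto
qed

lemma cycle_adj_R0: "cycle_adj n x y \<Longrightarrow> cycle_adj n (R0 x) (R0 y)"
  unfolding cycle_adj_def doubleton_eq_iff R0_apply unfolding n_eq
  by (elim conjE disjE) (simp_all split: if_split, presburger+)

lemma cycle_adj_R1: "cycle_adj n x y \<Longrightarrow> cycle_adj n (R1 x) (R1 y)"
  unfolding cycle_adj_def doubleton_eq_iff R1_apply unfolding n_eq
  by (elim conjE disjE) (simp_all split: if_split, presburger+)

lemma cycle_adj_smaller_neighbour: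
  assumes "cycle_adj n y z" "y \<le> n - 4"
  shows "z = y + 2 \<or> 1 \<le> z \<and> z < y + 2"
  using assms n_eq unfolding cycle_adj_def doubleton_eq_iff by auto

lemma cycle_automorphism_fixing_1_2:
  assumes inj: "inj p" and adj: "\<And>x y. cycle_adj n x y \<Longrightarrow> cycle_adj n (p x) (p y)"
    and p1: "p 1 = 1" and p2: "p 2 = 2"
  shows "1 \<le> x \<Longrightarrow> x \<le> n - 2 \<Longrightarrow> p x = x"
proof (induction x rule: less_induct)
  case (less x)
  show ?case
  proof (cases "x \<le> 2")
    case True
    then have "x = 1 \<or> x = 2" using less.prems by auto
    then show ?thesis using p1 p2 by auto
  next
    case False
    let ?y = "x - 2"
    have "cycle_adj n ?y x" using False less.prems n_eq unfolding cycle_adj_def by auto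
    moreover have "p ?y = ?y" using less.IH[of ?y] False less.prems by simp
    ultimately have "cycle_adj n ?y (p x)" using adj by metis
    moreover have "?y \<le> n - 4" using less.prems n_eq by arith
    ultimately have "p x = x \<or> 1 \<le> p x \<and> p x < x"
      using cycle_adj_smaller_neighbour[of ?y "p x"] False by auto
    moreover have "p (p x) = p x \<Longrightarrow> p x = x" using inj by (simp add: inj_eq)
    ultimately show ?thesis using less.IH[of "p x"] less.prems by auto
  qed
qed

lemma Gen01_invariant:
  "Gen {R0, R1} \<subseteq> {p. (\<forall>x y. cycle_adj n x y \<longrightarrow> cycle_adj n (p x) (p y)) \<and> p (n - 1) = n - 1 \<and> p n = n}"
  by (rule Gen_subset_invariant) (use cycle_adj_R0 cycle_adj_R1 R0_values R1_values in auto)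

lemma Gen01_fixing_1_2:
  assumes "p \<in> Gen {R0, R1}" "p 1 = 1" "p 2 = 2"
  shows "p = id"
proof
  fix x
  have p: "p permutes {1..n}" by (rule Gen_permutes[OF _ assms(1)]) auto
  have adj: "\<And>x y. cycle_adj n x y \<Longrightarrow> cycle_adj n (p x) (p y)" and "p (n - 1) = n - 1" "p n = n"
    using Gen01_invariant assms(1) by blast+
  moreover have "1 \<le> x \<Longrightarrow> x \<le> n - 2 \<Longrightarrow> p x = x"
    by (rule cycle_automorphism_fixing_1_2[OF permutes_inj[OF p] adj assms(2,3)])
  moreover have "x \<notin> {1..n} \<or> 1 \<le> x \<and> x \<le> n - 2 \<or> x = n - 1 \<or> x = n" by auto
  ultimately show "p x = id x" using permutes_not_in[OF p] by auto
qed

lemma Gen01_stabiliser: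
  assumes p: "p \<in> Gen {R0, R1}" and p1: "p 1 = 1"
  shows "p = id \<or> p = R1"
proof -
  have "cycle_adj n 1 2" using n_eq k_ge unfolding cycle_adj_def by auto
  moreover have "\<And>x y. cycle_adj n x y \<Longrightarrow> cycle_adj n (p x) (p y)"
    using Gen01_invariant p by blast
  ultimately have "cycle_adj n 1 (p 2)" using p1 by metis
  then have "p 2 = 2 \<or> p 2 = 3" using n_eq k_ge unfolding cycle_adj_def doubleton_eq_iff by auto
  then show ?thesis
  proof
    assume "p 2 = 2"
    then show ?thesis using Gen01_fixing_1_2 p p1 by blast
  next
    assume "p 2 = 3"
    have "R1 \<in> Gen {R0, R1}" by (rule generate.incl) simp
    then have "R1 \<circ> p \<in> Gen {R0, R1}" using p by (rule Gen_comp)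
    moreover have "(R1 \<circ> p) 1 = 1" "(R1 \<circ> p) 2 = 2" using p1 \<open>p 2 = 3\<close> R1_values by simp_all
    ultimately have "R1 \<circ> p = id" by (rule Gen01_fixing_1_2)
    then have "R1 \<circ> (R1 \<circ> p) = R1" by simp
    then show ?thesis using R_comp_self[of R1] by (simp add: comp_assoc[symmetric])
  qed
qed

lemma Gen23_invariant:
  "Gen {R2, R3} \<subseteq> {t \<circ> q | t q. t \<in> {id, Transposition.transpose 3 4} \<and> q permutes {n - 2, n - 1, n}}"
proof (rule Gen_subset_invariant)
  have "R2 = Transposition.transpose 3 4 \<circ> Transposition.transpose (n - 2) (n - 1)" "R3 = id \<circ> r3 n"
    by (simp_all add: r2_def)
  moreover have "Transposition.transpose (n - 2) (n - 1) permutes {n - 2, n - 1, n}" "R3 permutes {n - 2, n - 1, n}"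
    unfolding r3_def by (simp_all add: permutes_swap_id)
  ultimately show "{R2, R3} \<subseteq> {t \<circ> q | t q. t \<in> {id, Transposition.transpose 3 4} \<and> q permutes {n - 2, n - 1, n}}"
    by blast
  show "id \<in> {t \<circ> q | t q. t \<in> {id, Transposition.transpose 3 4} \<and> q permutes {n - 2, n - 1, n}}"
    using permutes_id[of "{n - 2, n - 1, n}"] by (auto intro!: exI[of _ id])
next
  fix p p'
  assume "p \<in> {t \<circ> q | t q. t \<in> {id, Transposition.transpose 3 4} \<and> q permutes {n - 2, n - 1, n}}"
    and "p' \<in> {t \<circ> q | t q. t \<in> {id, Transposition.transpose 3 4} \<and> q permutes {n - 2, n - 1, n}}"
  then obtain t q t' q' where p: "p = t \<circ> q" "t \<in> {id, Transposition.transpose 3 4}" "q permutes {n - 2, n - 1, n}"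
    and p': "p' = t' \<circ> q'" "t' \<in> {id, Transposition.transpose 3 4}" "q' permutes {n - 2, n - 1, n}"
    by blast
  have "q \<circ> t' = t' \<circ> q"
    using p(3) p'(2) permutes_transpose_commute[OF p(3), of 3 4] n_eq k_ge by auto
  then have "p \<circ> p' = (t \<circ> t') \<circ> (q \<circ> q')" unfolding p p' by (metis comp_assoc)
  moreover have "t \<circ> t' \<in> {id, Transposition.transpose 3 4}" using p(2) p'(2) by auto
  moreover have "q \<circ> q' permutes {n - 2, n - 1, n}" using p(3) p'(3) by (rule permutes_compose[rotated])
  ultimately show "p \<circ> p' \<in> {t \<circ> q | t q. t \<in> {id, Transposition.transpose 3 4} \<and> q permutes {n - 2, n - 1, n}}"
    by blast
qed auto

lemma Gen23_even_fixing_n: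
  assumes "p \<in> Gen {R2, R3}" "p n = n" "evenperm p"
  shows "p = id \<or> p = R2"
proof -
  obtain t q where p: "p = t \<circ> q" and t: "t \<in> {id, Transposition.transpose 3 4}"
    and q: "q permutes {n - 2, n - 1, n}"
    using Gen23_invariant assms(1) by blast
  have t_fixes: "t x = x" if "x \<in> {n - 2, n - 1, n}" for x
    using t that n_eq k_ge by (auto simp: Transposition.transpose_def)
  have "q n \<in> {n - 2, n - 1, n}" using permutes_in_image[OF q] by simp
  then have "q n = n" using assms(2) t_fixes unfolding p by auto
  then have "q permutes {n - 2, n - 1}" using permutes_superset[OF q] by auto
  then have "q = id \<or> q = Transposition.transpose (n - 2) (n - 1)" by (simp add: permutes_doubleton_iff)
  moreover have "\<not> evenperm (Transposition.transpose (3::nat) 4)"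
    "\<not> evenperm (Transposition.transpose (n - 2) (n - 1))" using n_eq by (simp_all add: evenperm_swap)
  ultimately show ?thesis
    using t assms(3) unfolding p r2_def
    by (auto simp: evenperm_comp permutation_swap_id)
qed

lemma R1_middle: "x \<in> {6..n - 4} \<Longrightarrow> R1 x \<in> {6..n - 4}"
  unfolding R1_apply using n_eq by auto presburger+

lemma upper_shape_comp:
  assumes p: "upper_shape n p" and q: "upper_shape n q"
  shows "upper_shape n (p \<circ> q)"
proof -
  obtain s where s: "\<forall>x \<in> {2..5}. p x \<in> {2..5} \<and> (p x \<in> {3, 4} \<longleftrightarrow> (x \<in> {3, 4}) \<noteq> s)"
    "\<forall>x \<in> {6..n - 4}. p x = (if s then R1 x else x)"
    using p unfolding upper_shape_def by blast
  obtain t where t: "\<forall>x \<in> {2..5}. q x \<in> {2..5} \<and> (q x \<in> {3, 4} \<longleftrightarrow> (x \<in> {3, 4}) \<noteq> t)"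
    "\<forall>x \<in> {6..n - 4}. q x = (if t then R1 x else x)"
    using q unfolding upper_shape_def by blast
  have "\<forall>x \<in> {2..5}. (p \<circ> q) x \<in> {2..5} \<and> ((p \<circ> q) x \<in> {3, 4} \<longleftrightarrow> (x \<in> {3, 4}) \<noteq> (s \<noteq> t))"
    using s(1) t(1) by auto
  moreover have "\<forall>x \<in> {6..n - 4}. (p \<circ> q) x = (if s \<noteq> t then R1 x else x)"
    using s(2) t(2) R1_middle R_involution(2) by auto
  ultimately show ?thesis using p q unfolding upper_shape_def by auto
qed

lemma tail_eq: "{n - 3..n} = {n - 3, n - 2, n - 1, n}"
  using n_eq by auto

lemma front_eq: "{2..5} = {2, 3, 4, 5 :: nat}"
  by auto

lemma upper_shape_generators: "upper_shape n R1" "upper_shape n R2" "upper_shape n R3"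
proof -
  have middle: "R2 x = x" "R3 x = x" if "x \<in> {6..n - 4}" for x
    using that n_eq unfolding r2_def r3_def Transposition.transpose_def by auto
  show "upper_shape n R1"
    unfolding upper_shape_def tail_eq front_eq using R1_values by (auto intro!: exI[of _ True])
  show "upper_shape n R2"
    unfolding upper_shape_def tail_eq front_eq using R2_values middle by (auto intro!: exI[of _ False])
  show "upper_shape n R3"
    unfolding upper_shape_def tail_eq front_eq using R3_values middle by (auto intro!: exI[of _ False])
qed

lemma Gen123_upper_shape: "Gen {R1, R2, R3} \<subseteq> {p. upper_shape n p}"
  by (rule Gen_subset_invariant)
    (use upper_shape_generators upper_shape_comp in \<open>auto simp: upper_shape_def intro: exI[of _ False]\<close>)

lemma Gen12_elements:
  assumes "w \<in> Gen {R1, R2}"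
  shows "w permutes {1..n}" "upper_shape n w" "w n = n" "evenperm w"
proof -
  show "w permutes {1..n}" by (rule Gen_permutes[OF _ assms]) auto
  show "upper_shape n w" using Gen123_upper_shape Gen_mono[of "{R1, R2}" "{R1, R2, R3}"] assms by blast
  show "w n = n" using Gen_fixed_points(3) Gen_mono[of "{R1, R2}" "{R0, R1, R2}"] assms by blast
  show "evenperm w" by (rule Gen_evenperm[OF _ _ assms]) (use R_even in auto)
qed

lemma upper_shape_tail: "upper_shape n p \<Longrightarrow> x \<in> {n - 3..n} \<Longrightarrow> p x \<in> {n - 3, n - 2, n - 1, n}"
  unfolding upper_shape_def tail_eq by blast

lemma Gen12_normalise_tail:
  assumes p: "p permutes {1..n}" "upper_shape n p" "p n = n"
  shows "\<exists>w \<in> Gen {R1, R2}. \<forall>x \<in> {n - 3..n}. (w \<circ> p) x = x"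
proof -
  have R12: "R1 \<in> Gen {R1, R2}" "R2 \<in> Gen {R1, R2}" by (auto intro: generate.incl)
  have distinct: "n - 3 \<noteq> n - 2" "n - 3 \<noteq> n - 1" "n - 3 \<noteq> n" "n - 2 \<noteq> n - 1" "n - 2 \<noteq> n" "n - 1 \<noteq> n"
    using n_eq by auto
  have "p (n - 1) \<noteq> p n" using permutes_inj[OF p(1)] distinct by (simp add: inj_eq)
  then have "p (n - 1) \<in> {n - 3, n - 2, n - 1}" using upper_shape_tail[OF p(2), of "n - 1"] p(3) by auto
  then obtain w1 where w1: "w1 \<in> Gen {R1, R2}" "w1 (p (n - 1)) = n - 1"
  proof (elim insertE emptyE)
    assume "p (n - 1) = n - 3" then show ?thesis
      using that[of "R2 \<circ> R1"] Gen_comp[OF R12(2,1)] R1_values R2_values by simp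
  next
    assume "p (n - 1) = n - 2" then show ?thesis using that[of R2] R12 R2_values by simp
  next
    assume "p (n - 1) = n - 1" then show ?thesis using that[of id] Gen_id by simp
  qed
  define p1 where "p1 = w1 \<circ> p"
  have p1: "p1 permutes {1..n}" "upper_shape n p1" "p1 n = n" "p1 (n - 1) = n - 1"
    using Gen12_elements[OF w1(1)] p w1(2) unfolding p1_def
    by (auto intro: permutes_compose upper_shape_comp)
  have "p1 (n - 2) \<noteq> p1 n" "p1 (n - 2) \<noteq> p1 (n - 1)"
    using permutes_inj[OF p1(1)] distinct by (simp_all add: inj_eq)
  then have "p1 (n - 2) \<in> {n - 3, n - 2}" using upper_shape_tail[OF p1(2), of "n - 2"] p1(3,4) by auto
  then obtain w2 where w2: "w2 \<in> Gen {R1, R2}" "w2 (p1 (n - 2)) = n - 2" "w2 (n - 1) = n - 1" "w2 n = n"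
  proof (elim insertE emptyE)
    assume "p1 (n - 2) = n - 3" then show ?thesis using that[of R1] R12 R1_values by simp
  next
    assume "p1 (n - 2) = n - 2" then show ?thesis using that[of id] Gen_id by simp
  qed
  define p2 where "p2 = w2 \<circ> p1"
  have p2: "p2 permutes {1..n}" "upper_shape n p2" "p2 n = n" "p2 (n - 1) = n - 1" "p2 (n - 2) = n - 2"
    using Gen12_elements[OF w2(1)] p1 w2(2-4) unfolding p2_def
    by (auto intro: permutes_compose upper_shape_comp)
  have "p2 (n - 3) \<noteq> p2 n" "p2 (n - 3) \<noteq> p2 (n - 1)" "p2 (n - 3) \<noteq> p2 (n - 2)"
    using permutes_inj[OF p2(1)] distinct by (simp_all add: inj_eq)
  then have "p2 (n - 3) = n - 3" using upper_shape_tail[OF p2(2), of "n - 3"] p2(3-5) by auto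
  then have "\<forall>x \<in> {n - 3..n}. ((w2 \<circ> w1) \<circ> p) x = x"
    using p2(3-5) unfolding tail_eq p2_def p1_def by auto
  then show ?thesis using Gen_comp[OF w2(1) w1(1)] by blast
qed

lemma Gen12_normalise_front:
  assumes p: "upper_shape n p" "\<forall>x \<in> {n - 3..n}. p x = x"
  shows "\<exists>w \<in> Gen {R1, R2}. (w \<circ> p) 2 = 2 \<and> (\<forall>x \<in> {n - 3..n}. (w \<circ> p) x = x)"
proof -
  \<comment> \<open>\<open>(\<rho>1\<rho>2)^3\<close> is the 4-cycle (2 4 5 3) times an involution of {6..n-4}; it fixes the tail.\<close>
  define v where "v = R1 \<circ> R2 \<circ> R1 \<circ> R2 \<circ> R1 \<circ> R2"
  have v: "v \<in> Gen {R1, R2}" unfolding v_def by (intro Gen_comp generate.incl) auto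
  have v_values: "v 3 = 2" "v 5 = 3" "v 4 = 5" "\<forall>x \<in> {n - 3..n}. v x = x"
    unfolding v_def tail_eq using R1_values R2_values by simp_all
  have "p 2 \<in> {2, 3, 4, 5}" using p(1) unfolding upper_shape_def front_eq by blast
  then obtain w where w: "w \<in> {id, v, v \<circ> v, v \<circ> v \<circ> v}" "w (p 2) = 2"
  proof (elim insertE emptyE)
    assume "p 2 = 2" then show ?thesis using that[of id] by simp
  next
    assume "p 2 = 3" then show ?thesis using that[of v] v_values by simp
  next
    assume "p 2 = 4" then show ?thesis using that[of "v \<circ> v \<circ> v"] v_values by simp
  next
    assume "p 2 = 5" then show ?thesis using that[of "v \<circ> v"] v_values by simp
  qed
  moreover have "{id, v, v \<circ> v, v \<circ> v \<circ> v} \<subseteq> Gen {R1, R2}" using v Gen_id Gen_comp by blast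
  moreover have "\<forall>x \<in> {n - 3..n}. w x = x" using w(1) v_values(4) by auto
  ultimately show ?thesis using p(2) by auto
qed

lemma upper_shape_fixing_2_and_tail:
  assumes p: "p permutes {1..n}" "upper_shape n p" "p 2 = 2" "\<forall>x \<in> {n - 3..n}. p x = x"
  shows "p = id \<or> p = Transposition.transpose 3 4"
proof -
  obtain s where s: "\<forall>x \<in> {2..5}. p x \<in> {2..5} \<and> (p x \<in> {3, 4} \<longleftrightarrow> (x \<in> {3, 4}) \<noteq> s)"
    "\<forall>x \<in> {6..n - 4}. p x = (if s then R1 x else x)" and p1: "p 1 = 1"
    using p(2) unfolding upper_shape_def by blast
  have front: "p x \<in> {2..5} \<and> (p x \<in> {3, 4} \<longleftrightarrow> (x \<in> {3, 4}) \<noteq> s)" if "x \<in> {2, 3, 4, 5}" for x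
    using s(1) that unfolding front_eq by blast
  have "\<not> s" using front[of 2] p(3) by simp
  then have middle: "x \<in> {6..n - 4} \<Longrightarrow> p x = x" for x using s(2) by simp
  have "p 5 \<in> {2, 5}" "p 3 \<in> {3, 4}" "p 4 \<in> {3, 4}"
    using front[of 3] front[of 4] front[of 5] \<open>\<not> s\<close> unfolding front_eq by auto
  moreover have "p 5 \<noteq> p 2" "p 3 \<noteq> p 4" using permutes_inj[OF p(1)] by (simp_all add: inj_eq)
  ultimately have p5: "p 5 = 5" and p34: "p 3 = 3 \<and> p 4 = 4 \<or> p 3 = 4 \<and> p 4 = 3" using p(3) by auto
  have outside: "p x = x" if "x \<noteq> 3" "x \<noteq> 4" for x
  proof -
    have "x \<notin> {1..n} \<or> x \<in> {1, 2, 5} \<or> x \<in> {6..n - 4} \<or> x \<in> {n - 3..n}"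
      using that n_eq by auto
    then show ?thesis using permutes_not_in[OF p(1)] middle p(3,4) p1 p5 by auto
  qed
  from p34 show ?thesis
  proof
    assume "p 3 = 3 \<and> p 4 = 4"
    then have "p x = x" for x using outside by (cases "x = 3 \<or> x = 4") auto
    then have "p = id" by auto
    then show ?thesis ..
  next
    assume "p 3 = 4 \<and> p 4 = 3"
    then have "p = Transposition.transpose 3 4" using outside by (auto simp: fun_eq_iff Transposition.transpose_def)
    then show ?thesis ..
  qed
qed

lemma Gen012_Int_Gen123: "Gen {R0, R1, R2} \<inter> Gen {R1, R2, R3} \<subseteq> Gen {R1, R2}"
proof
  fix g assume g: "g \<in> Gen {R0, R1, R2} \<inter> Gen {R1, R2, R3}"
  have g_perm: "g permutes {1..n}" by (rule Gen_permutes[of "{R0, R1, R2}"]) (use g in auto)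
  have g_shape: "upper_shape n g" using Gen123_upper_shape g by blast
  have g_n: "g n = n" by (rule Gen_fixes[of "{R0, R1, R2}"]) (use g R0_values R1_values R2_values in auto)
  have g_even: "evenperm g" by (rule Gen_evenperm[of "{R0, R1, R2}"]) (use g R_even in auto)
  obtain w1 where w1: "w1 \<in> Gen {R1, R2}" "\<forall>x \<in> {n - 3..n}. (w1 \<circ> g) x = x"
    using Gen12_normalise_tail[OF g_perm g_shape g_n] by blast
  have shape1: "upper_shape n (w1 \<circ> g)" using Gen12_elements(2)[OF w1(1)] g_shape by (rule upper_shape_comp)
  obtain w2 where w2: "w2 \<in> Gen {R1, R2}" "(w2 \<circ> (w1 \<circ> g)) 2 = 2" "\<forall>x \<in> {n - 3..n}. (w2 \<circ> (w1 \<circ> g)) x = x"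
    using Gen12_normalise_front[OF shape1 w1(2)] by blast
  define w where "w = w2 \<circ> w1"
  have w: "w \<in> Gen {R1, R2}" unfolding w_def using w2(1) w1(1) by (rule Gen_comp)
  have wg: "w \<circ> g permutes {1..n}" "upper_shape n (w \<circ> g)"
    using Gen12_elements[OF w] g_perm g_shape by (auto intro: permutes_compose upper_shape_comp)
  have "w \<circ> g = id \<or> w \<circ> g = Transposition.transpose 3 4"
    by (rule upper_shape_fixing_2_and_tail[OF wg]) (use w2 in \<open>simp_all add: w_def comp_assoc\<close>)
  moreover have "evenperm (w \<circ> g)"
    using Gen12_elements(1,4)[OF w] g_even permutes_imp_permutation[OF _ g_perm]
      permutes_imp_permutation[OF _ Gen12_elements(1)[OF w]] by (simp add: evenperm_comp)
  ultimately have "w \<circ> g = id" by (auto simp: evenperm_swap)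
  then show "g \<in> Gen {R1, R2}" using Gen_left_cancel[OF _ w g_perm] by auto
qed

lemma R_distinct: "R0 \<noteq> R1" "R0 \<noteq> R2" "R0 \<noteq> R3" "R1 \<noteq> R2" "R1 \<noteq> R3" "R2 \<noteq> R3"
proof -
  have "R0 1 \<noteq> R1 1" "R0 1 \<noteq> R2 1" "R0 1 \<noteq> R3 1" "R1 2 \<noteq> R2 2" "R1 2 \<noteq> R3 2" "R2 3 \<noteq> R3 3"
    using R0_values R1_values R2_values R3_values by simp_all
  then show "R0 \<noteq> R1" "R0 \<noteq> R2" "R0 \<noteq> R3" "R1 \<noteq> R2" "R1 \<noteq> R3" "R2 \<noteq> R3" by auto
qed

lemma Gen_single_Int:
  assumes "a \<in> {R0, R1, R2, R3}" "b \<in> {R0, R1, R2, R3}" "a \<noteq> b"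
  shows "Gen {a} \<inter> Gen {b} \<subseteq> Gen {}"
proof -
  have "Gen {a} \<subseteq> {id, a}" "Gen {b} \<subseteq> {id, b}"
    using Gen_commuting_pair[of a a] Gen_commuting_pair[of b b] assms(1,2) R_comp_self by auto
  then show ?thesis using assms(3) Gen_id by auto
qed

lemma rank_one_intersections:
  "Gen {R0} \<inter> Gen {R1} \<subseteq> Gen {}" "Gen {R0} \<inter> Gen {R2} \<subseteq> Gen {}" "Gen {R0} \<inter> Gen {R3} \<subseteq> Gen {}"
  "Gen {R1} \<inter> Gen {R2} \<subseteq> Gen {}" "Gen {R1} \<inter> Gen {R3} \<subseteq> Gen {}" "Gen {R2} \<inter> Gen {R3} \<subseteq> Gen {}"
  using R_distinct by (simp_all add: Gen_single_Int)

lemma rank_two_intersections: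
  "Gen {R0, R2} \<inter> Gen {R1, R2} \<subseteq> Gen {R2}" "Gen {R0, R3} \<inter> Gen {R1, R3} \<subseteq> Gen {R3}"
  "Gen {R0, R1} \<inter> Gen {R1, R2} \<subseteq> Gen {R1}" "Gen {R0, R3} \<inter> Gen {R2, R3} \<subseteq> Gen {R3}"
  "Gen {R0, R1} \<inter> Gen {R1, R3} \<subseteq> Gen {R1}" "Gen {R0, R2} \<inter> Gen {R2, R3} \<subseteq> Gen {R2}"
  "Gen {R0, R1} \<inter> Gen {R0, R2} \<subseteq> Gen {R0}" "Gen {R1, R3} \<inter> Gen {R2, R3} \<subseteq> Gen {R3}"
  "Gen {R0, R1} \<inter> Gen {R0, R3} \<subseteq> Gen {R0}" "Gen {R1, R2} \<inter> Gen {R2, R3} \<subseteq> Gen {R2}"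
  "Gen {R0, R2} \<inter> Gen {R0, R3} \<subseteq> Gen {R0}" "Gen {R1, R2} \<inter> Gen {R1, R3} \<subseteq> Gen {R1}"
proof -
  have fix1: "p 1 = 1" if "p \<in> Gen {R1, R2} \<or> p \<in> Gen {R1, R3} \<or> p \<in> Gen {R2, R3}" for p
    using that Gen_mono[of "{R1, R2}" "{R1, R2, R3}"] Gen_mono[of "{R1, R3}" "{R1, R2, R3}"]
      Gen_mono[of "{R2, R3}" "{R1, R2, R3}"] Gen_fixed_points(1) by blast
  have fixn: "p n = n" if "p \<in> Gen {R0, R1} \<or> p \<in> Gen {R0, R2} \<or> p \<in> Gen {R1, R2}" for p
    using that Gen_mono[of "{R0, R1}" "{R0, R1, R2}"] Gen_mono[of "{R0, R2}" "{R0, R1, R2}"]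
      Gen_mono[of "{R1, R2}" "{R0, R1, R2}"] Gen_fixed_points(3) by blast
  note pair = Gen_commuting_pair_Int
  note comm = R_commute R_commute[symmetric]
  note vals = R0_values R1_values R2_values R3_values
  have "Gen {R2, R0} \<inter> Gen {R1, R2} \<subseteq> Gen {R2}"
    by (rule pair[where x = "1"]) (use comm vals n_eq fix1 in auto)
  then show "Gen {R0, R2} \<inter> Gen {R1, R2} \<subseteq> Gen {R2}" by (simp add: insert_commute)
  have "Gen {R3, R0} \<inter> Gen {R1, R3} \<subseteq> Gen {R3}"
    by (rule pair[where x = "1"]) (use comm vals n_eq fix1 in auto)
  then show "Gen {R0, R3} \<inter> Gen {R1, R3} \<subseteq> Gen {R3}" by (simp add: insert_commute)
  have "Gen {R3, R0} \<inter> Gen {R2, R3} \<subseteq> Gen {R3}"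
    by (rule pair[where x = "1"]) (use comm vals n_eq fix1 in auto)
  then show "Gen {R0, R3} \<inter> Gen {R2, R3} \<subseteq> Gen {R3}" by (simp add: insert_commute)
  have "Gen {R2, R0} \<inter> Gen {R2, R3} \<subseteq> Gen {R2}"
    by (rule pair[where x = "1"]) (use comm vals n_eq fix1 in auto)
  then show "Gen {R0, R2} \<inter> Gen {R2, R3} \<subseteq> Gen {R2}" by (simp add: insert_commute)
  have "Gen {R3, R1} \<inter> Gen {R2, R3} \<subseteq> Gen {R3}"
    by (rule pair[where x = "2"]) (use comm vals n_eq Gen_fixed_points(2) in auto)
  then show "Gen {R1, R3} \<inter> Gen {R2, R3} \<subseteq> Gen {R3}" by (simp add: insert_commute)
  have "Gen {R1, R3} \<inter> Gen {R0, R1} \<subseteq> Gen {R1}"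
    by (rule pair[where x = "n"]) (use comm vals n_eq fixn in auto)
  then show "Gen {R0, R1} \<inter> Gen {R1, R3} \<subseteq> Gen {R1}" by (simp add: Int_commute)
  have "Gen {R0, R2} \<inter> Gen {R0, R1} \<subseteq> Gen {R0}"
    by (rule pair[where x = "n - 1"]) (use comm vals n_eq Gen_fixed_points(4) in auto)
  then show "Gen {R0, R1} \<inter> Gen {R0, R2} \<subseteq> Gen {R0}" by (simp add: Int_commute)
  have "Gen {R0, R3} \<inter> Gen {R0, R1} \<subseteq> Gen {R0}"
    by (rule pair[where x = "n"]) (use comm vals n_eq fixn in auto)
  then show "Gen {R0, R1} \<inter> Gen {R0, R3} \<subseteq> Gen {R0}" by (simp add: Int_commute)
  have "Gen {R0, R3} \<inter> Gen {R0, R2} \<subseteq> Gen {R0}"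
    by (rule pair[where x = "n"]) (use comm vals n_eq fixn in auto)
  then show "Gen {R0, R2} \<inter> Gen {R0, R3} \<subseteq> Gen {R0}" by (simp add: Int_commute)
  have "Gen {R1, R3} \<inter> Gen {R1, R2} \<subseteq> Gen {R1}"
    by (rule pair[where x = "n"]) (use comm vals n_eq fixn in auto)
  then show "Gen {R1, R2} \<inter> Gen {R1, R3} \<subseteq> Gen {R1}" by (simp add: Int_commute)
  show "Gen {R0, R1} \<inter> Gen {R1, R2} \<subseteq> Gen {R1}"
    using Gen01_stabiliser fix1 Gen_id generate.incl[of R1 "{R1}"] by blast
  show "Gen {R1, R2} \<inter> Gen {R2, R3} \<subseteq> Gen {R2}"
  proof
    fix g assume g: "g \<in> Gen {R1, R2} \<inter> Gen {R2, R3}"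
    then have "g = id \<or> g = R2"
      using Gen23_even_fixing_n Gen12_elements(3,4) by blast
    then show "g \<in> Gen {R2}" using Gen_id generate.incl[of R2 "{R2}"] by auto
  qed
qed

lemma Gen_cosets:
  "g \<in> Gen {R0, R1, R3} \<Longrightarrow> g \<in> Gen {R0, R1} \<or> g \<circ> R3 \<in> Gen {R0, R1}"
  "g \<in> Gen {R0, R2, R3} \<Longrightarrow> g \<in> Gen {R2, R3} \<or> g \<circ> R0 \<in> Gen {R2, R3}"
proof -
  show "g \<in> Gen {R0, R1, R3} \<Longrightarrow> g \<in> Gen {R0, R1} \<or> g \<circ> R3 \<in> Gen {R0, R1}"
    by (rule Gen_insert_commuting_cases) (use R_commute in \<open>auto simp: insert_commute\<close>)
  show "g \<in> Gen {R0, R2, R3} \<Longrightarrow> g \<in> Gen {R2, R3} \<or> g \<circ> R0 \<in> Gen {R2, R3}"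
    by (rule Gen_insert_commuting_cases) (use R_commute in auto)
qed

lemma Gen01_Int_Gen23:
  assumes "p \<in> Gen {R0, R1}" "p \<in> Gen {R2, R3}"
  shows "p = id"
proof -
  have "p 1 = 1" using Gen_fixed_points(1) Gen_mono[of "{R2, R3}" "{R1, R2, R3}"] assms(2) by blast
  then have "p = id \<or> p = R1" using Gen01_stabiliser assms(1) by blast
  moreover have "p 2 = 2" using Gen_fixed_points(2) assms(2) by blast
  ultimately show ?thesis using R1_values by auto
qed

lemma Gen01_Int_Gen023:
  assumes "p \<in> Gen {R0, R1}" "p \<in> Gen {R0, R2, R3}"
  shows "p = id \<or> p = R0"
proof -
  have R0: "R0 \<in> Gen {R0, R1}" by (rule generate.incl) simp
  from Gen_cosets(2)[OF assms(2)] show ?thesis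
  proof
    assume "p \<in> Gen {R2, R3}"
    then show ?thesis using Gen01_Int_Gen23 assms(1) by blast
  next
    assume "p \<circ> R0 \<in> Gen {R2, R3}"
    moreover have "p \<circ> R0 \<in> Gen {R0, R1}" using assms(1) R0 by (rule Gen_comp)
    ultimately have "p \<circ> R0 = id" using Gen01_Int_Gen23 by blast
    then have "p \<circ> R0 \<circ> R0 = R0" by simp
    then show ?thesis using R_comp_self[of R0] by (simp add: comp_assoc)
  qed
qed

lemma rank_three_intersections:
  "Gen {R0, R2, R3} \<inter> Gen {R1, R2, R3} \<subseteq> Gen {R2, R3}"
  "Gen {R0, R1, R3} \<inter> Gen {R1, R2, R3} \<subseteq> Gen {R1, R3}"
  "Gen {R0, R1, R2} \<inter> Gen {R1, R2, R3} \<subseteq> Gen {R1, R2}"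
  "Gen {R0, R1, R3} \<inter> Gen {R0, R2, R3} \<subseteq> Gen {R0, R3}"
  "Gen {R0, R1, R2} \<inter> Gen {R0, R2, R3} \<subseteq> Gen {R0, R2}"
  "Gen {R0, R1, R2} \<inter> Gen {R0, R1, R3} \<subseteq> Gen {R0, R1}"
proof -
  have incl: "r \<in> Gen S" if "r \<in> S" for r S using that by (rule generate.incl)
  have cancel: "g = (g \<circ> r) \<circ> r" if "r \<in> {R0, R1, R2, R3}" for g r
    using R_comp_self[OF that] by (simp add: comp_assoc)
  show "Gen {R0, R2, R3} \<inter> Gen {R1, R2, R3} \<subseteq> Gen {R2, R3}"
  proof
    fix g assume g: "g \<in> Gen {R0, R2, R3} \<inter> Gen {R1, R2, R3}"
    have "g 1 = 1" using Gen_fixed_points(1) g by blast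
    then have "(g \<circ> R0) 2 \<noteq> 2" using R0_values by simp
    then show "g \<in> Gen {R2, R3}" using Gen_cosets(2) Gen_fixed_points(2) g by blast
  qed
  show "Gen {R0, R1, R3} \<inter> Gen {R1, R2, R3} \<subseteq> Gen {R1, R3}"
  proof
    fix g assume g: "g \<in> Gen {R0, R1, R3} \<inter> Gen {R1, R2, R3}"
    then have g1: "g 1 = 1" "(g \<circ> R3) 1 = 1" using Gen_fixed_points(1) R3_values by auto
    have "{id, R1} \<subseteq> Gen {R1, R3}" using Gen_id incl by auto
    moreover have "(\<lambda>h. h \<circ> R3) ` {id, R1} \<subseteq> Gen {R1, R3}" using Gen_comp incl by auto
    moreover have "g \<in> {id, R1} \<or> g \<circ> R3 \<in> {id, R1}"
      using Gen_cosets(1)[of g] g g1 Gen01_stabiliser by blast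
    ultimately show "g \<in> Gen {R1, R3}" using cancel[of R3 g] by auto
  qed
  show "Gen {R0, R1, R2} \<inter> Gen {R1, R2, R3} \<subseteq> Gen {R1, R2}" by (rule Gen012_Int_Gen123)
  show "Gen {R0, R1, R3} \<inter> Gen {R0, R2, R3} \<subseteq> Gen {R0, R3}"
  proof
    fix g assume g: "g \<in> Gen {R0, R1, R3} \<inter> Gen {R0, R2, R3}"
    have "g \<circ> R3 \<in> Gen {R0, R2, R3}" using g incl[of R3] Gen_comp by auto
    then have "g \<in> {id, R0} \<or> g \<circ> R3 \<in> {id, R0}"
      using Gen_cosets(1)[of g] g Gen01_Int_Gen023 by blast
    moreover have "{id, R0} \<subseteq> Gen {R0, R3}" using Gen_id incl by auto
    moreover have "(\<lambda>h. h \<circ> R3) ` {id, R0} \<subseteq> Gen {R0, R3}" using Gen_comp incl by auto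
    ultimately show "g \<in> Gen {R0, R3}" using cancel[of R3 g] by auto
  qed
  show "Gen {R0, R1, R2} \<inter> Gen {R0, R2, R3} \<subseteq> Gen {R0, R2}"
  proof
    fix g assume g: "g \<in> Gen {R0, R1, R2} \<inter> Gen {R0, R2, R3}"
    have g_n: "g n = n" "(g \<circ> R0) n = n" using Gen_fixed_points(3) g R0_values by auto
    have "evenperm g" by (rule Gen_evenperm[of "{R0, R1, R2}"]) (use g R_even in auto)
    moreover have "permutation g" "permutation R0"
      using Gen_permutes[of "{R0, R1, R2}" g] g R_permutes permutes_imp_permutation by auto
    ultimately have g_even: "evenperm g" "evenperm (g \<circ> R0)" using R_even by (simp_all add: evenperm_comp)
    have "g \<in> {id, R2} \<or> g \<circ> R0 \<in> {id, R2}"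
      using Gen_cosets(2)[of g] g g_n g_even Gen23_even_fixing_n by blast
    moreover have "{id, R2} \<subseteq> Gen {R0, R2}" using Gen_id incl by auto
    moreover have "(\<lambda>h. h \<circ> R0) ` {id, R2} \<subseteq> Gen {R0, R2}" using Gen_comp incl by auto
    ultimately show "g \<in> Gen {R0, R2}" using cancel[of R0 g] by auto
  qed
  show "Gen {R0, R1, R2} \<inter> Gen {R0, R1, R3} \<subseteq> Gen {R0, R1}"
  proof
    fix g assume g: "g \<in> Gen {R0, R1, R2} \<inter> Gen {R0, R1, R3}"
    have "g n = n" using Gen_fixed_points(3) g by blast
    then have "(g \<circ> R3) (n - 1) \<noteq> n - 1" using R3_values n_eq by simp
    then show "g \<in> Gen {R0, R1}" using Gen_cosets(1) Gen_fixed_points(4) g by blast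
  qed
qed

lemma transpose_n_in_Gen:
  assumes "a \<in> {1..<n}"
  shows "Transposition.transpose a n \<in> Gen {R0, R1, R2, R3}"
proof -
  have "a \<le> n - 1" "1 \<le> a" using assms by auto
  then show ?thesis
  proof (induction a rule: inc_induct)
    case base
    show ?case using generate.incl[of R3 "{R0, R1, R2, R3}"] unfolding r3_def by simp
  next
    case (step m)
    obtain r where r: "r \<in> {R0, R1, R2}" "r (Suc m) = m" "r n = n"
    proof -
      consider "m = n - 2" | "odd m" "m < n - 2" | "even m" "m < n - 2" using step.hyps by fastforce
      then show ?thesis
      proof cases
        case 1 then show ?thesis using that[of R2] R2_values n_eq by (simp add: Suc_diff_Suc)
      next
        case 2
        then have "Suc m \<le> 4 * k" using n_eq by presburger
        then show ?thesis using that[of R0] R0_values 2 step.prems unfolding R0_apply by auto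
      next
        case 3 then show ?thesis using that[of R1] R1_values step.prems n_eq unfolding R1_apply by auto
      qed
    qed
    then have "Transposition.transpose m n = r \<circ> Transposition.transpose (Suc m) n \<circ> r"
      using involution_conj_transpose[of r "Suc m" n] R_involution by auto
    moreover have "r \<in> Gen {R0, R1, R2, R3}" using r(1) by (auto intro: generate.incl)
    moreover have "Transposition.transpose (Suc m) n \<in> Gen {R0, R1, R2, R3}" using step.IH by simp
    ultimately show ?case using Gen_comp by metis
  qed
qed

lemma Gen_eq_carrier: "Gen {R0, R1, R2, R3} = carrier (sym_group n)"
  using generate_sym_group_by_transpositions R_carrier transpose_n_in_Gen by blast

lemma rho_range:
  assumes "i < 4"
  shows "rho n i \<in> {R0, R1, R2, R3}"
proof -
  have "i = 0 \<or> i = 1 \<or> i = 2 \<or> i = 3" using assms by arith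
  then show ?thesis using rho_eq by auto
qed

lemma R_not_id:
  assumes "r \<in> {R0, R1, R2, R3}"
  shows "r \<noteq> id"
proof -
  have "R0 1 \<noteq> id 1" "R1 2 \<noteq> id 2" "R2 3 \<noteq> id 3" "R3 n \<noteq> id n"
    using R0_values(1) R1_values(2) R2_values(3) R3_values(9) n_eq by simp_all
  then show ?thesis using assms by auto
qed

lemma sggi_rho: "sggi (sym_group n) 4 (rho n)"
  unfolding sggi_def sym_group_mult sym_group_one
proof (intro conjI allI impI)
  fix i :: nat assume "i < 4"
  then show "rho n i \<in> carrier (sym_group n)" "rho n i \<noteq> id" "rho n i \<circ> rho n i = id"
    using rho_range R_carrier R_not_id R_comp_self by blast+
next
  fix i j :: nat assume "i < 4" "j < 4" "2 \<le> \<bar>int i - int j\<bar>"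
  then have "i = 0 \<and> j = 2 \<or> i = 0 \<and> j = 3 \<or> i = 1 \<and> j = 3 \<or>
      i = 2 \<and> j = 0 \<or> i = 3 \<and> j = 0 \<or> i = 3 \<and> j = 1"
    by arith
  then have "rho n i \<circ> rho n j = rho n j \<circ> rho n i"
    using R_commute by (elim disjE conjE) (simp_all add: rho_eq R_commute[symmetric])
  then show "rho n i \<circ> rho n j \<circ> (rho n i \<circ> rho n j) = id"
    using commuting_involutions_comp_square rho_range R_comp_self \<open>i < 4\<close> \<open>j < 4\<close> by blast
qed

lemma corank_two:
  assumes "M \<subseteq> {..<4}" "a \<in> {..<4} - M" "b \<in> {..<4} - M" "a < b"
  shows "Gen (rho n ` insert a M) \<inter> Gen (rho n ` insert b M) \<subseteq> Gen (rho n ` M)"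
proof -
  have subset_pair: "M = {} \<or> M = {c} \<or> M = {d} \<or> M = {c, d}" if "M \<subseteq> {c, d}" for c d :: nat
    using that by (cases "c \<in> M"; cases "d \<in> M") auto
  have four: "{..<4} = {0, 1, 2, 3 :: nat}" by (auto simp: lessThan_nat_numeral)
  have M: "M \<subseteq> {0, 1, 2, 3}" using assms(1) unfolding four .
  note intersections = rank_one_intersections rank_two_intersections rank_three_intersections
  consider "a = 0" "b = 1" | "a = 0" "b = 2" | "a = 0" "b = 3" | "a = 1" "b = 2" | "a = 1" "b = 3"
    | "a = 2" "b = 3" using assms(2-4) unfolding four by auto
  then show ?thesis
  proof cases
    case 1
    then have "M \<subseteq> {2, 3}" using M assms(2,3) by auto
    from subset_pair[OF this] show ?thesis
      using 1 by (elim disjE) (simp_all add: rho_eq intersections insert_commute)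
  next
    case 2
    then have "M \<subseteq> {1, 3}" using M assms(2,3) by auto
    from subset_pair[OF this] show ?thesis
      using 2 by (elim disjE) (simp_all add: rho_eq intersections insert_commute)
  next
    case 3
    then have "M \<subseteq> {1, 2}" using M assms(2,3) by auto
    from subset_pair[OF this] show ?thesis
      using 3 by (elim disjE) (simp_all add: rho_eq intersections insert_commute)
  next
    case 4
    then have "M \<subseteq> {0, 3}" using M assms(2,3) by auto
    from subset_pair[OF this] show ?thesis
      using 4 by (elim disjE) (simp_all add: rho_eq intersections insert_commute)
  next
    case 5
    then have "M \<subseteq> {0, 2}" using M assms(2,3) by auto
    from subset_pair[OF this] show ?thesis
      using 5 by (elim disjE) (simp_all add: rho_eq intersections insert_commute)
  next
    case 6
    then have "M \<subseteq> {0, 1}" using M assms(2,3) by auto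
    from subset_pair[OF this] show ?thesis
      using 6 by (elim disjE) (simp_all add: rho_eq intersections insert_commute)
  qed
qed

end

theorem proposition3p9:
  fixes n :: nat
  assumes "n \<ge> 11" and "n mod 4 = 3"
  shows "generate (sym_group n) (rho n ` {..<4}) = carrier (sym_group n)
         \<and> string_C_group (sym_group n) 4 (rho n)"
proof -
  interpret labelled_path n "n div 4"
    using assms by unfold_locales arith+
  have "rho n ` {..<4} = {R0, R1, R2, R3}"
    using rho_range rho_eq by (auto simp: lessThan_nat_numeral image_iff)
  moreover have "Gen (rho n ` J) \<inter> Gen (rho n ` K) = Gen (rho n ` (J \<inter> K))"
    if "J \<subseteq> {..<4}" "K \<subseteq> {..<4}" for J K
    using group.generate_Int_generate_eq[OF sym_group_is_group finite_lessThan that corank_two] by blast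
  ultimately show ?thesis
    unfolding string_C_group_def using Gen_eq_carrier sggi_rho by simp
qed

end
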